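(* Let $m\ge4$ and let $p=(p_1,\dots,p_m)$, $q=(q_1,\dots,q_m)$ be ordered $m$-tuples of distinct points of $\partial\mathbf H^n_{\mathbb H}$, with invariants computed using lifts whose Gram matrices are semi-normalized. If the $(d+1)$-tuples $F(p)=(u_0,\mathbb X_1,\dots,\mathbb X_d)$ and $F(q)$, $d=\frac{m(m-3)}{2}$, are $\mathrm{Sp}(1)$-congruent and $\mathbb A_{23}(p)=\mathbb A_{23}(q)$, then $p$ and $q$ are $\mathrm{PSp}(n,1)$-congruent. That is, the $\mathrm{Sp}(1)$-congruence class of $F$ and $\mathbb A_{23}$ determine the $\mathrm{PSp}(n,1)$-congruence class of $p$.
   Context: $\mathbb H^{n,1}$ is the right quaternionic vector space $\mathbb H^{n+1}$ with Hermitian form $\langle\mathbf z,\mathbf w\rangle=\bar w_{n+1}z_1+\bar w_2z_2+\cdots+\bar w_nz_n+\bar w_1z_{n+1}$; $\partial\mathbf H^n_{\mathbb H}$ is the set of quaternionic lines of nonzero null vectors; $\mathrm{PSp}(n,1)=\mathrm{Sp}(n,1)/\{\pm I\}$ where $\mathrm{Sp}(n,1)$ preserves the form. For a lift $(\mathbf p_1,\dots,\mathbf p_m)$ the Gram matrix is $g_{kj}=\langle\mathbf p_j,\mathbf p_k\rangle$; it is semi-normalized if $g_{1j}=1$ for $2\le j\le m$ and $|g_{23}|=1$ (diagonal entries are $0$). Cross ratio $\mathbb X(z_1,z_2,z_3,z_4)=\langle\mathbf z_3,\mathbf z_1\rangle\langle\mathbf z_3,\mathbf z_2\rangle^{-1}\langle\mathbf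 z_4,\mathbf z_2\rangle\langle\mathbf z_4,\mathbf z_1\rangle^{-1}$; $\mathbb X_1,\dots,\mathbb X_d$ list in a fixed order $\mathbb X(\mathbf p_1,\mathbf p_2,\mathbf p_3,\mathbf p_j)$, $\mathbb X(\mathbf p_1,\mathbf p_3,\mathbf p_2,\mathbf p_j)$ ($4\le j\le m$) and $\mathbb X(\mathbf p_1,\mathbf p_k,\mathbf p_2,\mathbf p_j)$ ($4\le k<j\le m$). $\mathbb A_{23}=\arccos\frac{\Re(-\langle\mathbf p_1,\mathbf p_2,\mathbf p_3\rangle)}{|\langle\mathbf p_1,\mathbf p_2,\mathbf p_3\rangle|}$ with $\langle\mathbf z_1,\mathbf z_2,\mathbf z_3\rangle=\langle\mathbf z_1,\mathbf z_2\rangle\langle\mathbf z_2,\mathbf z_3\rangle\langle\mathbf z_3,\mathbf z_1\rangle$. $u_0=\Im(g_{23})/|\Im(g_{23})|$ if $\mathbb A_{23}\ne0$, else $u_0=0$. Tuples $F,F'$ are $\mathrm{Sp}(1)$-congruent if $F'=\mu F\bar\mu$ componentwise for some unit quaternion $\mu$. *)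

theory Defs
  imports Complex_Main
begin

datatype quat = Quat (qre: real) (qi: real) (qj: real) (qk: real)

instantiation quat :: ab_group_add
begin
definition "0 = Quat 0 0 0 0"
definition "x + y = Quat (qre x + qre y) (qi x + qi y) (qj x + qj y) (qk x + qk y)"
definition "- x = Quat (- qre x) (- qi x) (- qj x) (- qk x)"
definition "x - y = Quat (qre x - qre y) (qi x - qi y) (qj x - qj y) (qk x - qk y)"
instance
  by standard (simp_all add: zero_quat_def plus_quat_def uminus_quat_def minus_quat_def
      quat.expand)
end

instantiation quat :: "{one, times, inverse}"
begin
definition "1 = Quat 1 0 0 0"
definition "x * y = Quat
   (qre x * qre y - qi x * qi y - qj x * qj y - qk x * qk y)
   (qre x * qi y + qi x * qre y + qj x * qk y - qk x * qj y)
   (qre x * qj y - qi x * qk y + qj x * qre y + qk x * qi y)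
   (qre x * qk y + qi x * qj y - qj x * qi y + qk x * qre y)"
definition "inverse x = (let s = (qre x)\<^sup>2 + (qi x)\<^sup>2 + (qj x)\<^sup>2 + (qk x)\<^sup>2 in
   Quat (qre x / s) (- qi x / s) (- qj x / s) (- qk x / s))"
definition "x div y = x * inverse (y :: quat)"
instance ..
end

definition qcnj :: "quat \<Rightarrow> quat" where
  "qcnj x = Quat (qre x) (- qi x) (- qj x) (- qk x)"

definition qabs :: "quat \<Rightarrow> real" where
  "qabs x = sqrt ((qre x)\<^sup>2 + (qi x)\<^sup>2 + (qj x)\<^sup>2 + (qk x)\<^sup>2)"

definition qim :: "quat \<Rightarrow> quat" where
  "qim x = Quat 0 (qi x) (qj x) (qk x)"

definition qscale :: "real \<Rightarrow> quat \<Rightarrow> quat" where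
  "qscale r x = Quat (r * qre x) (r * qi x) (r * qj x) (r * qk x)"

text \<open>Vectors of the right H-module H^{n+1}: functions on indices 1..n+1, zero elsewhere.\<close>
type_synonym qvec = "nat \<Rightarrow> quat"

definition qvecs :: "nat \<Rightarrow> qvec set" where
  "qvecs n = {z. \<forall>i. i \<notin> {1..n+1} \<longrightarrow> z i = 0}"

definition hform :: "nat \<Rightarrow> qvec \<Rightarrow> qvec \<Rightarrow> quat" where
  "hform n z w = qcnj (w (n+1)) * z 1 + (\<Sum>i\<in>{2..n}. qcnj (w i) * z i) + qcnj (w 1) * z (n+1)"

definition qline :: "qvec \<Rightarrow> qvec set" where
  "qline z = {(\<lambda>i. z i * c) | c. c \<noteq> 0}"

definition bdry :: "nat \<Rightarrow> qvec set set" where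
  "bdry n = {qline z | z. z \<in> qvecs n \<and> z \<noteq> (\<lambda>i. 0) \<and> hform n z z = 0}"

definition mv :: "nat \<Rightarrow> (nat \<Rightarrow> nat \<Rightarrow> quat) \<Rightarrow> qvec \<Rightarrow> qvec" where
  "mv n A z = (\<lambda>i. if i \<in> {1..n+1} then \<Sum>j\<in>{1..n+1}. A i j * z j else 0)"

definition Sp_n1 :: "nat \<Rightarrow> (nat \<Rightarrow> nat \<Rightarrow> quat) set" where
  "Sp_n1 n = {A. bij_betw (mv n A) (qvecs n) (qvecs n) \<and>
     (\<forall>z\<in>qvecs n. \<forall>w\<in>qvecs n. hform n (mv n A z) (mv n A w) = hform n z w)}"

text \<open>PSp(n,1)-congruence of ordered m-tuples of boundary points (the action of
  A in Sp(n,1) on a point is the image of the line; -I acts trivially).\<close>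
definition PSp_congruent :: "nat \<Rightarrow> nat \<Rightarrow> (nat \<Rightarrow> qvec set) \<Rightarrow> (nat \<Rightarrow> qvec set) \<Rightarrow> bool" where
  "PSp_congruent n m p q \<longleftrightarrow> (\<exists>A\<in>Sp_n1 n. \<forall>i\<in>{1..m}. mv n A ` p i = q i)"

definition is_lift :: "nat \<Rightarrow> (nat \<Rightarrow> qvec set) \<Rightarrow> (nat \<Rightarrow> qvec) \<Rightarrow> bool" where
  "is_lift m p P \<longleftrightarrow> (\<forall>i\<in>{1..m}. P i \<in> p i)"

definition gram :: "nat \<Rightarrow> (nat \<Rightarrow> qvec) \<Rightarrow> nat \<Rightarrow> nat \<Rightarrow> quat" where
  "gram n P k j = hform n (P j) (P k)"

definition semi_normalized :: "nat \<Rightarrow> nat \<Rightarrow> (nat \<Rightarrow> qvec) \<Rightarrow> bool" where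
  "semi_normalized n m P \<longleftrightarrow> (\<forall>j\<in>{2..m}. gram n P 1 j = 1) \<and> qabs (gram n P 2 3) = 1"

definition cross_ratio :: "nat \<Rightarrow> qvec \<Rightarrow> qvec \<Rightarrow> qvec \<Rightarrow> qvec \<Rightarrow> quat" where
  "cross_ratio n z1 z2 z3 z4 =
     hform n z3 z1 * inverse (hform n z3 z2) * hform n z4 z2 * inverse (hform n z4 z1)"

definition cross_ratios :: "nat \<Rightarrow> nat \<Rightarrow> (nat \<Rightarrow> qvec) \<Rightarrow> quat list" where
  "cross_ratios n m P =
     map (\<lambda>j. cross_ratio n (P 1) (P 2) (P 3) (P j)) [4..<m+1] @
     map (\<lambda>j. cross_ratio n (P 1) (P 3) (P 2) (P j)) [4..<m+1] @
     concat (map (\<lambda>k. map (\<lambda>j. cross_ratio n (P 1) (P k) (P 2) (P j)) [k+1..<m+1]) [4..<m+1])"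

definition herm_triple :: "nat \<Rightarrow> qvec \<Rightarrow> qvec \<Rightarrow> qvec \<Rightarrow> quat" where
  "herm_triple n z1 z2 z3 = hform n z1 z2 * hform n z2 z3 * hform n z3 z1"

definition A23 :: "nat \<Rightarrow> (nat \<Rightarrow> qvec) \<Rightarrow> real" where
  "A23 n P = arccos (qre (- herm_triple n (P 1) (P 2) (P 3)) / qabs (herm_triple n (P 1) (P 2) (P 3)))"

definition u0 :: "nat \<Rightarrow> (nat \<Rightarrow> qvec) \<Rightarrow> quat" where
  "u0 n P = (if A23 n P \<noteq> 0
     then qscale (1 / qabs (qim (gram n P 2 3))) (qim (gram n P 2 3)) else 0)"

definition Finv :: "nat \<Rightarrow> nat \<Rightarrow> (nat \<Rightarrow> qvec) \<Rightarrow> quat list" where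
  "Finv n m P = u0 n P # cross_ratios n m P"

definition Sp1_congruent :: "quat list \<Rightarrow> quat list \<Rightarrow> bool" where
  "Sp1_congruent F F' \<longleftrightarrow> (\<exists>\<mu>. qabs \<mu> = 1 \<and> F' = map (\<lambda>x. \<mu> * x * qcnj \<mu>) F)"

end

theory Submission
  imports Defs
begin

text \<open>
  For semi-normalised lifts all cross ratios reduce to quotients of Gram entries
  (\<open>g\<^sub>k\<^sub>j = \<langle>p\<^sub>j,p\<^sub>k\<rangle>\<close>): \<open>X(p\<^sub>1,p\<^sub>2,p\<^sub>3,p\<^sub>j) = g\<^sub>2\<^sub>3\<^sup>-\<^sup>1 g\<^sub>2\<^sub>j\<close>,
  \<open>X(p\<^sub>1,p\<^sub>3,p\<^sub>2,p\<^sub>j) = g\<^sub>3\<^sub>2\<^sup>-\<^sup>1 g\<^sub>3\<^sub>j\<close> and \<open>X(p\<^sub>1,p\<^sub>k,p\<^sub>2,p\<^sub>j) = g\<^sub>k\<^sub>2\<^sup>-\<^sup>1 g\<^sub>k\<^sub>j\<close>,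
  while \<open>A\<^sub>2\<^sub>3\<close> fixes the real part of the unit quaternion \<open>g\<^sub>2\<^sub>3\<close> and \<open>u\<^sub>0\<close> the
  direction of its imaginary part. So if \<open>F(q) = \<mu> F(p) \<mu>\<^sup>-\<^sup>1\<close> and the angles agree,
  first \<open>g\<^sub>2\<^sub>3(q) = \<mu> g\<^sub>2\<^sub>3(p) \<mu>\<^sup>-\<^sup>1\<close>, and then, column by column, every Gram entry
  of \<open>q\<close> is the \<open>\<mu>\<close>-conjugate of the corresponding entry of \<open>p\<close>. Rescaling the lift
  of \<open>q\<close> by \<open>\<mu>\<close> makes the Gram matrices equal, and a Witt-type extension theorem,
  proved with quaternionic reflections and transvections, yields an element of \<open>Sp(n,1)\<close>
  carrying one lift to the other.
\<close>

section \<open>Quaternion algebra\<close>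

lemma quat_eqI: "qre x = qre y \<Longrightarrow> qi x = qi y \<Longrightarrow> qj x = qj y \<Longrightarrow> qk x = qk y \<Longrightarrow> x = y"
  by (simp add: quat.expand)

lemma quat_sel_simps [simp]:
  "qre 0 = 0" "qi 0 = 0" "qj 0 = 0" "qk 0 = 0"
  "qre 1 = 1" "qi 1 = 0" "qj 1 = 0" "qk 1 = 0"
  "qre (x + y) = qre x + qre y" "qi (x + y) = qi x + qi y" "qj (x + y) = qj x + qj y" "qk (x + y) = qk x + qk y"
  "qre (x - y) = qre x - qre y" "qi (x - y) = qi x - qi y" "qj (x - y) = qj x - qj y" "qk (x - y) = qk x - qk y"
  "qre (- x) = - qre x" "qi (- x) = - qi x" "qj (- x) = - qj x" "qk (- x) = - qk x"
  "qre (x * y) = qre x * qre y - qi x * qi y - qj x * qj y - qk x * qk y"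
  "qi (x * y) = qre x * qi y + qi x * qre y + qj x * qk y - qk x * qj y"
  "qj (x * y) = qre x * qj y - qi x * qk y + qj x * qre y + qk x * qi y"
  "qk (x * y) = qre x * qk y + qi x * qj y - qj x * qi y + qk x * qre y"
  by (simp_all add: zero_quat_def one_quat_def plus_quat_def minus_quat_def uminus_quat_def times_quat_def)

instance quat :: division_ring
proof
  fix a b c :: quat
  show "a * b * c = a * (b * c)" by (rule quat_eqI) (simp_all add: algebra_simps)
  show "1 * a = a" by (rule quat_eqI) simp_all
  show "a * 1 = a" by (rule quat_eqI) simp_all
  show "(a + b) * c = a * c + b * c" by (rule quat_eqI) (simp_all add: algebra_simps)
  show "a * (b + c) = a * b + a * c" by (rule quat_eqI) (simp_all add: algebra_simps)
  show "(0::quat) \<noteq> 1" by (metis quat_sel_simps(1,5) zero_neq_one)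
  show "a / b = a * inverse b" by (simp add: divide_quat_def)
  show "inverse (0::quat) = 0" by (simp add: inverse_quat_def zero_quat_def)
next
  fix a :: quat assume "a \<noteq> 0"
  define t where "t = (qre a)\<^sup>2 + (qi a)\<^sup>2 + (qj a)\<^sup>2 + (qk a)\<^sup>2"
  have tn: "t \<noteq> 0"
    using \<open>a \<noteq> 0\<close> unfolding t_def
    by (metis (no_types, lifting) add_nonneg_eq_0_iff quat_eqI quat_sel_simps(1-4) zero_le_power2
        power_eq_0_iff add_nonneg_nonneg)
  have inv: "inverse a = Quat (qre a / t) (- qi a / t) (- qj a / t) (- qk a / t)"
    by (simp add: inverse_quat_def t_def Let_def)
  show "inverse a * a = 1"
    by (rule quat_eqI) (simp_all add: inv, simp_all add: field_simps tn,
        simp_all add: t_def power2_eq_square algebra_simps)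
  show "a * inverse a = 1"
    by (rule quat_eqI) (simp_all add: inv, simp_all add: field_simps tn,
        simp_all add: t_def power2_eq_square algebra_simps)
qed

definition quat_of_real :: "real \<Rightarrow> quat" where
  "quat_of_real r = Quat r 0 0 0"

lemma quat_of_real_sel [simp]:
  "qre (quat_of_real r) = r" "qi (quat_of_real r) = 0" "qj (quat_of_real r) = 0" "qk (quat_of_real r) = 0"
  by (simp_all add: quat_of_real_def)

lemma quat_of_real_0 [simp]: "quat_of_real 0 = 0"
  and quat_of_real_1 [simp]: "quat_of_real 1 = 1"
  by (rule quat_eqI, simp_all)+

lemma quat_of_real_commute: "quat_of_real r * x = x * quat_of_real r"
  by (rule quat_eqI) simp_all

lemma quat_of_real_add: "quat_of_real (a + b) = quat_of_real a + quat_of_real b"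
  by (rule quat_eqI) simp_all

lemma quat_of_real_sum: "quat_of_real (sum f A) = (\<Sum>i\<in>A. quat_of_real (f i))"
  by (induction A rule: infinite_finite_induct) (simp_all add: quat_of_real_add)

lemma quat_of_real_minus: "quat_of_real (- a) = - quat_of_real a"
  by (rule quat_eqI) simp_all

lemma quat_of_real_inject: "quat_of_real a = quat_of_real b \<longleftrightarrow> a = b"
  by (metis quat_of_real_sel(1))

lemma quat_decomp: "z = quat_of_real (qre z) + qim z"
  by (rule quat_eqI) (simp_all add: qim_def)

lemma qscale_eq_mult: "qscale r z = quat_of_real r * z"
  by (rule quat_eqI) (simp_all add: qscale_def)

lemma quat_of_nat_sel:
  "qre (of_nat k :: quat) = of_nat k \<and> qi (of_nat k :: quat) = 0 \<and>
   qj (of_nat k :: quat) = 0 \<and> qk (of_nat k :: quat) = 0"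
  by (induct k) simp_all

lemma quat_numeral_sel [simp]:
  "qre (numeral k :: quat) = numeral k" "qi (numeral k :: quat) = 0"
  "qj (numeral k :: quat) = 0" "qk (numeral k :: quat) = 0"
  using quat_of_nat_sel[of "numeral k"] by (simp_all only: of_nat_numeral)

lemma qcnj_sel [simp]:
  "qre (qcnj x) = qre x" "qi (qcnj x) = - qi x" "qj (qcnj x) = - qj x" "qk (qcnj x) = - qk x"
  by (simp_all add: qcnj_def)

lemma qcnj_mult: "qcnj (x * y) = qcnj y * qcnj x"
  by (rule quat_eqI) (simp_all add: algebra_simps)

lemma qcnj_add [simp]: "qcnj (x + y) = qcnj x + qcnj y"
  and qcnj_diff [simp]: "qcnj (x - y) = qcnj x - qcnj y"
  and qcnj_minus [simp]: "qcnj (- x) = - qcnj x"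
  and qcnj_qcnj [simp]: "qcnj (qcnj x) = x"
  and qcnj_0 [simp]: "qcnj 0 = 0"
  and qcnj_1 [simp]: "qcnj 1 = 1"
  and qcnj_quat_of_real [simp]: "qcnj (quat_of_real r) = quat_of_real r"
  by (rule quat_eqI, simp_all)+

lemma qcnj_eq_0_iff [simp]: "qcnj x = 0 \<longleftrightarrow> x = 0"
  by (metis qcnj_0 qcnj_qcnj)

lemma qcnj_sum: "qcnj (sum f A) = (\<Sum>i\<in>A. qcnj (f i))"
  by (induction A rule: infinite_finite_induct) simp_all

lemma qcnj_inverse: "qcnj (inverse x) = inverse (qcnj x)"
proof (cases "x = 0")
  case False
  have "qcnj x * qcnj (inverse x) = 1"
    using False by (simp flip: qcnj_mult)
  then show ?thesis by (rule inverse_unique[symmetric])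
qed simp

definition qnorm_sq :: "quat \<Rightarrow> real" where
  "qnorm_sq x = (qre x)\<^sup>2 + (qi x)\<^sup>2 + (qj x)\<^sup>2 + (qk x)\<^sup>2"

lemma qnorm_sq_nonneg: "qnorm_sq x \<ge> 0"
  by (simp add: qnorm_sq_def)

lemma qnorm_sq_eq_0_iff: "qnorm_sq x = 0 \<longleftrightarrow> x = 0"
proof
  assume "qnorm_sq x = 0" then show "x = 0"
    unfolding qnorm_sq_def by (intro quat_eqI) (simp_all add: add_nonneg_eq_0_iff)
qed (simp add: qnorm_sq_def)

lemma mult_qcnj: "x * qcnj x = quat_of_real (qnorm_sq x)" "qcnj x * x = quat_of_real (qnorm_sq x)"
  by (rule quat_eqI, simp_all add: qnorm_sq_def power2_eq_square algebra_simps)+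

lemma add_qcnj: "x + qcnj x = quat_of_real (2 * qre x)"
  by (rule quat_eqI) simp_all

lemma qabs_eq_1_iff: "qabs x = 1 \<longleftrightarrow> qnorm_sq x = 1"
  unfolding qabs_def qnorm_sq_def by simp

lemma qabs_eq_0_iff: "qabs x = 0 \<longleftrightarrow> x = 0"
  using qnorm_sq_eq_0_iff[of x] qnorm_sq_nonneg[of x] by (simp add: qabs_def qnorm_sq_def)

lemma unit_quat_mult_qcnj: "qabs \<mu> = 1 \<Longrightarrow> \<mu> * qcnj \<mu> = 1 \<and> qcnj \<mu> * \<mu> = 1"
  by (simp add: qabs_eq_1_iff mult_qcnj)

lemma qabs_qcnj [simp]: "qabs (qcnj x) = qabs x"
  by (simp add: qabs_def)

lemma hform_add_left: "hform n (\<lambda>i. z i + w i) u = hform n z u + hform n w u"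
  unfolding hform_def by (simp add: distrib_left sum.distrib algebra_simps)

lemma hform_diff_left: "hform n (\<lambda>i. z i - w i) u = hform n z u - hform n w u"
  unfolding hform_def by (simp add: right_diff_distrib sum_subtractf algebra_simps)

lemma hform_scale_left: "hform n (\<lambda>i. z i * c) w = hform n z w * c"
  unfolding hform_def by (simp add: distrib_right sum_distrib_right mult.assoc)

lemma hform_zero_left [simp]: "hform n (\<lambda>i. 0) w = 0"
  unfolding hform_def by simp

lemma hform_conj: "hform n w z = qcnj (hform n z w)"
  unfolding hform_def by (simp add: qcnj_mult qcnj_sum algebra_simps)

lemma hform_eq_1_sym: "hform n w z = 1 \<Longrightarrow> hform n z w = 1"
  and hform_eq_0_sym: "hform n w z = 0 \<Longrightarrow> hform n z w = 0"
  by (metis hform_conj qcnj_1, metis hform_conj qcnj_0)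

lemma hform_add_right: "hform n u (\<lambda>i. z i + w i) = hform n u z + hform n u w"
  by (subst hform_conj, simp add: hform_add_left) (metis hform_conj)

lemma hform_diff_right: "hform n u (\<lambda>i. z i - w i) = hform n u z - hform n u w"
  by (subst hform_conj, simp add: hform_diff_left) (metis hform_conj)

lemma hform_scale_right: "hform n z (\<lambda>i. w i * c) = qcnj c * hform n z w"
  by (subst hform_conj, simp add: hform_scale_left qcnj_mult) (metis hform_conj)

lemmas hform_linear =
  hform_add_left hform_add_right hform_diff_left hform_diff_right hform_scale_left hform_scale_right

lemma hform_diff_self_null:
  assumes "hform n a a = 0" "hform n w w = 0"
  shows "hform n (\<lambda>i. a i - w i) (\<lambda>i. a i - w i) = - quat_of_real (2 * qre (hform n a w))"
proof -
  have "hform n (\<lambda>i. a i - w i) (\<lambda>i. a i - w i) = - (hform n a w + qcnj (hform n a w))"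
    using assms by (simp add: hform_diff_left hform_diff_right flip: hform_conj)
  then show ?thesis by (simp add: add_qcnj)
qed

definition mmul :: "nat \<Rightarrow> (nat \<Rightarrow> nat \<Rightarrow> quat) \<Rightarrow> (nat \<Rightarrow> nat \<Rightarrow> quat) \<Rightarrow> nat \<Rightarrow> nat \<Rightarrow> quat" where
  "mmul n A B = (\<lambda>i j. \<Sum>k\<in>{1..n+1}. A i k * B k j)"

definition idmat :: "nat \<Rightarrow> nat \<Rightarrow> quat" where
  "idmat = (\<lambda>i j. if i = j then 1 else 0)"

lemma mv_in_qvecs [simp]: "mv n A z \<in> qvecs n"
  by (simp add: mv_def qvecs_def)

lemma mv_mmul: "mv n (mmul n A B) z = mv n A (mv n B z)"
proof
  fix i
  show "mv n (mmul n A B) z i = mv n A (mv n B z) i"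
  proof (cases "i \<in> {1..n+1}")
    case True
    have "mv n A (mv n B z) i = (\<Sum>j\<in>{1..n+1}. A i j * (\<Sum>k\<in>{1..n+1}. B j k * z k))"
      using True by (simp add: mv_def)
    also have "\<dots> = (\<Sum>j\<in>{1..n+1}. \<Sum>k\<in>{1..n+1}. A i j * B j k * z k)"
      by (simp only: sum_distrib_left mult.assoc)
    also have "\<dots> = (\<Sum>k\<in>{1..n+1}. \<Sum>j\<in>{1..n+1}. A i j * B j k * z k)"
      by (rule sum.swap)
    also have "\<dots> = mv n (mmul n A B) z i"
      using True by (simp only: mv_def mmul_def sum_distrib_right if_True)
    finally show ?thesis by simp
  qed (simp only: mv_def if_False)
qed

lemma mv_idmat:
  assumes "z \<in> qvecs n"
  shows "mv n idmat z = z"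
proof
  fix i
  have "\<And>j. (if i = j then 1 else 0) * z j = (if i = j then z j else 0)" by simp
  then show "mv n idmat z i = z i"
    using assms by (simp add: mv_def idmat_def qvecs_def del: sum.cl_ivl_Suc)
qed

lemma mv_scale: "mv n A (\<lambda>k. z k * c) = (\<lambda>i. mv n A z i * c)"
  by (simp add: mv_def sum_distrib_right mult.assoc fun_eq_iff del: sum.cl_ivl_Suc)

lemma Sp_n1_hform:
  "A \<in> Sp_n1 n \<Longrightarrow> z \<in> qvecs n \<Longrightarrow> w \<in> qvecs n \<Longrightarrow> hform n (mv n A z) (mv n A w) = hform n z w"
  unfolding Sp_n1_def by blast

lemma Sp_n1_mmul: "A \<in> Sp_n1 n \<Longrightarrow> B \<in> Sp_n1 n \<Longrightarrow> mmul n A B \<in> Sp_n1 n"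
proof -
  assume a: "A \<in> Sp_n1 n" and b: "B \<in> Sp_n1 n"
  have "bij_betw (mv n A \<circ> mv n B) (qvecs n) (qvecs n)"
    using a b unfolding Sp_n1_def by (auto intro: bij_betw_trans)
  moreover have "mv n A \<circ> mv n B = mv n (mmul n A B)"
    by (simp add: fun_eq_iff mv_mmul)
  ultimately show ?thesis
    using a b by (simp add: Sp_n1_def Sp_n1_hform mv_mmul)
qed

lemma Sp_n1_idmat: "idmat \<in> Sp_n1 n"
proof -
  have "bij_betw (mv n idmat) (qvecs n) (qvecs n)"
    by (rule bij_betw_byWitness[where f'="mv n idmat"]) (auto simp: mv_idmat)
  then show ?thesis unfolding Sp_n1_def by (simp add: mv_idmat)
qed

lemma Sp_n1_maps_trans:
  assumes "A \<in> Sp_n1 n" "B \<in> Sp_n1 n" "mv n A a = w" "mv n B w = b"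
  shows "\<exists>C\<in>Sp_n1 n. mv n C a = b"
  using assms Sp_n1_mmul[OF assms(2,1)] mv_mmul by metis

section \<open>Transvections\<close>

text \<open>The index swap \<open>1 \<leftrightarrow> n+1\<close> reflects the antidiagonal shape of the form, so that
  \<open>tmat n d \<alpha>\<close> is the matrix of \<open>z \<mapsto> z + d \<alpha> \<langle>z,d\<rangle>\<close>.\<close>

definition swap_ends :: "nat \<Rightarrow> nat \<Rightarrow> nat" where
  "swap_ends n j = (if j = 1 then n+1 else if j = n+1 then 1 else j)"

definition tmat :: "nat \<Rightarrow> qvec \<Rightarrow> quat \<Rightarrow> nat \<Rightarrow> nat \<Rightarrow> quat" where
  "tmat n d \<alpha> = (\<lambda>i j. (if i = j then 1 else 0) + d i * \<alpha> * qcnj (d (swap_ends n j)))"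

definition transvect :: "nat \<Rightarrow> qvec \<Rightarrow> quat \<Rightarrow> qvec \<Rightarrow> qvec" where
  "transvect n d \<alpha> z = (\<lambda>i. z i + d i * (\<alpha> * hform n z d))"

lemma sum_swap_ends_eq_hform:
  assumes "n \<ge> 1"
  shows "(\<Sum>j\<in>{1..n+1}. qcnj (d (swap_ends n j)) * z j) = hform n z d"
proof -
  have I: "{1..n+1} = insert 1 (insert (n+1) {2..n})" using assms by auto
  have "(\<Sum>j\<in>{2..n}. qcnj (d (swap_ends n j)) * z j) = (\<Sum>j\<in>{2..n}. qcnj (d j) * z j)"
    by (rule sum.cong) (auto simp: swap_ends_def)
  then show ?thesis using assms unfolding I hform_def
    by (simp add: swap_ends_def algebra_simps)
qed

lemma mv_tmat:
  assumes "n \<ge> 1" "d \<in> qvecs n" "z \<in> qvecs n"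
  shows "mv n (tmat n d \<alpha>) z = transvect n d \<alpha> z"
proof
  fix i
  show "mv n (tmat n d \<alpha>) z i = transvect n d \<alpha> z i"
  proof (cases "i \<in> {1..n+1}")
    case True
    have e: "\<And>j. (if i = j then 1 else 0) * z j = (if i = j then z j else 0)" by simp
    have "mv n (tmat n d \<alpha>) z i
        = (\<Sum>j\<in>{1..n+1}. (if i = j then z j else 0) + d i * \<alpha> * (qcnj (d (swap_ends n j)) * z j))"
      using True by (simp add: mv_def tmat_def distrib_right mult.assoc e del: sum.cl_ivl_Suc)
    also have "\<dots> = z i + d i * \<alpha> * (\<Sum>j\<in>{1..n+1}. qcnj (d (swap_ends n j)) * z j)"
      using True by (simp add: sum.distrib sum_distrib_left del: sum.cl_ivl_Suc)
    also have "\<dots> = transvect n d \<alpha> z i"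
      by (simp only: sum_swap_ends_eq_hform[OF assms(1)] transvect_def mult.assoc)
    finally show ?thesis .
  next
    case False
    have "mv n (tmat n d \<alpha>) z i = 0"
      unfolding mv_def by (simp only: if_not_P[OF False] if_False)
    moreover have "transvect n d \<alpha> z i = 0"
      using False assms(2,3) unfolding transvect_def qvecs_def by simp
    ultimately show ?thesis by simp
  qed
qed

lemma transvect_in_qvecs: "d \<in> qvecs n \<Longrightarrow> z \<in> qvecs n \<Longrightarrow> transvect n d \<alpha> z \<in> qvecs n"
  by (simp add: transvect_def qvecs_def)

lemma transvect_hform:
  assumes "\<alpha> + qcnj \<alpha> + qcnj \<alpha> * hform n d d * \<alpha> = 0"
  shows "hform n (transvect n d \<alpha> z) (transvect n d \<alpha> w) = hform n z w"
proof -
  define s where "s = hform n z d"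
  define t where "t = hform n w d"
  have dw: "hform n d w = qcnj t" using t_def by (metis hform_conj)
  have "hform n (transvect n d \<alpha> z) (transvect n d \<alpha> w)
      = hform n z w + qcnj t * (\<alpha> + qcnj \<alpha> + qcnj \<alpha> * hform n d d * \<alpha>) * s"
    unfolding transvect_def
    by (simp add: hform_linear qcnj_mult s_def[symmetric] t_def[symmetric] dw algebra_simps)
  then show ?thesis using assms by simp
qed

lemma transvect_qcnj_inverse:
  assumes "\<alpha> + qcnj \<alpha> + qcnj \<alpha> * hform n d d * \<alpha> = 0"
  shows "transvect n d (qcnj \<alpha>) (transvect n d \<alpha> z) = z"
proof -
  have "transvect n d (qcnj \<alpha>) (transvect n d \<alpha> z)
      = (\<lambda>i. z i + d i * ((\<alpha> + qcnj \<alpha> + qcnj \<alpha> * hform n d d * \<alpha>) * hform n z d))"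
    unfolding transvect_def by (simp add: hform_add_left hform_scale_left algebra_simps)
  then show ?thesis using assms by simp
qed

text \<open>The first condition makes the transvection an isometry with left inverse
  \<open>transvect n d (qcnj \<alpha>)\<close>; the second makes that inverse two-sided.\<close>

lemma tmat_in_Sp_n1:
  assumes n: "n \<ge> 1" and d: "d \<in> qvecs n"
    and C: "\<alpha> + qcnj \<alpha> + qcnj \<alpha> * hform n d d * \<alpha> = 0"
    and C': "\<alpha> + qcnj \<alpha> + \<alpha> * hform n d d * qcnj \<alpha> = 0"
  shows "tmat n d \<alpha> \<in> Sp_n1 n"
proof -
  have C2: "qcnj \<alpha> + qcnj (qcnj \<alpha>) + qcnj (qcnj \<alpha>) * hform n d d * qcnj \<alpha> = 0"
    using C' by (simp add: algebra_simps)
  have "bij_betw (mv n (tmat n d \<alpha>)) (qvecs n) (qvecs n)"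
  proof (rule bij_betw_byWitness[where f'="mv n (tmat n d (qcnj \<alpha>))"])
    show "\<forall>a\<in>qvecs n. mv n (tmat n d (qcnj \<alpha>)) (mv n (tmat n d \<alpha>) a) = a"
      using transvect_qcnj_inverse[OF C] by (simp add: mv_tmat[OF n d] transvect_in_qvecs[OF d])
    show "\<forall>a\<in>qvecs n. mv n (tmat n d \<alpha>) (mv n (tmat n d (qcnj \<alpha>)) a) = a"
      using transvect_qcnj_inverse[OF C2] by (simp add: mv_tmat[OF n d] transvect_in_qvecs[OF d])
  qed auto
  then show ?thesis
    unfolding Sp_n1_def by (simp add: mv_tmat[OF n d] transvect_hform[OF C])
qed

lemma null_transvection_in_Sp_n1:
  assumes "n \<ge> 1" "v \<in> qvecs n" "hform n v v = 0" "t + qcnj t = 0"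
  shows "tmat n v t \<in> Sp_n1 n"
  using assms by (intro tmat_in_Sp_n1) simp_all

lemma exists_Sp_n1_reflection:
  assumes n: "n \<ge> 1" and aq: "a \<in> qvecs n" and bq: "b \<in> qvecs n"
    and ab: "hform n a a = hform n b b"
    and D0: "hform n (\<lambda>i. a i - b i) (\<lambda>i. a i - b i) \<noteq> 0"
  shows "\<exists>A\<in>Sp_n1 n. mv n A a = b \<and>
           (\<forall>w\<in>qvecs n. hform n w (\<lambda>i. a i - b i) = 0 \<longrightarrow> mv n A w = w)"
proof -
  define d where "d = (\<lambda>i. a i - b i)"
  have dq: "d \<in> qvecs n" using aq bq by (auto simp: qvecs_def d_def)
  define x where "x = hform n a d"
  have D: "hform n d d = x + qcnj x"
    using ab unfolding x_def d_def by (simp add: hform_diff_left hform_diff_right flip: hform_conj)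
  have x0: "x \<noteq> 0" "qcnj x \<noteq> 0" using D0 D unfolding d_def by auto
  define \<alpha> where "\<alpha> = - inverse x"
  have ca: "qcnj \<alpha> = - inverse (qcnj x)" unfolding \<alpha>_def by (simp add: qcnj_inverse)
  have "qcnj \<alpha> * hform n d d * \<alpha>
      = inverse (qcnj x) * (x * inverse x) + inverse (qcnj x) * qcnj x * inverse x"
    "\<alpha> * hform n d d * qcnj \<alpha>
      = inverse x * x * inverse (qcnj x) + inverse x * (qcnj x * inverse (qcnj x))"
    unfolding ca D \<alpha>_def by (simp_all add: algebra_simps qcnj_inverse)
  then have "qcnj \<alpha> * hform n d d * \<alpha> = inverse (qcnj x) + inverse x"
    "\<alpha> * hform n d d * qcnj \<alpha> = inverse (qcnj x) + inverse x"
    using x0 by (simp_all add: mult.assoc)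
  then have "\<alpha> + qcnj \<alpha> + qcnj \<alpha> * hform n d d * \<alpha> = 0"
    "\<alpha> + qcnj \<alpha> + \<alpha> * hform n d d * qcnj \<alpha> = 0"
    by (simp_all add: ca \<alpha>_def qcnj_inverse)
  then have "tmat n d \<alpha> \<in> Sp_n1 n"
    by (rule tmat_in_Sp_n1[OF n dq])
  moreover have "mv n (tmat n d \<alpha>) a = b"
  proof -
    have "mv n (tmat n d \<alpha>) a = (\<lambda>i. a i + d i * (\<alpha> * x))"
      by (simp add: mv_tmat[OF n dq aq] transvect_def x_def)
    also have "\<dots> = b"
      unfolding \<alpha>_def d_def using x0 by (simp add: fun_eq_iff)
    finally show ?thesis .
  qed
  moreover have "\<forall>w\<in>qvecs n. hform n w d = 0 \<longrightarrow> mv n (tmat n d \<alpha>) w = w"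
    by (simp add: mv_tmat[OF n dq] transvect_def)
  ultimately show ?thesis unfolding d_def by blast
qed

lemma exists_Sp_n1_null_to_null:
  assumes n: "n \<ge> 1" and "a \<in> qvecs n" "w \<in> qvecs n" "hform n a a = 0" "hform n w w = 0"
    and "qre (hform n a w) \<noteq> 0"
  shows "\<exists>B\<in>Sp_n1 n. mv n B a = w"
proof -
  have "hform n (\<lambda>i. a i - w i) (\<lambda>i. a i - w i) \<noteq> 0"
    using hform_diff_self_null[OF assms(4,5)] assms(6)
    by (metis quat_of_real_inject quat_of_real_minus quat_of_real_0 mult_eq_0_iff zero_neq_numeral
        neg_equal_0_iff_equal)
  then show ?thesis using exists_Sp_n1_reflection[OF n assms(2,3)] assms(4,5) by auto
qed

section \<open>Witt's extension theorem for null frames\<close>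

lemma hform_pos_on_diagonal:
  assumes "n \<ge> 1" "u \<in> qvecs n" "u 1 = u (n+1)" "qre (hform n u u) \<le> 0"
  shows "u = (\<lambda>i. 0)"
proof -
  have "hform n u u = quat_of_real (qnorm_sq (u 1)) + (\<Sum>i\<in>{2..n}. quat_of_real (qnorm_sq (u i)))
      + quat_of_real (qnorm_sq (u 1))"
    unfolding hform_def using assms(3) by (simp add: mult_qcnj)
  then have "qre (hform n u u) = 2 * qnorm_sq (u 1) + (\<Sum>i\<in>{2..n}. qnorm_sq (u i))"
    by (simp flip: quat_of_real_sum)
  with assms(4) have le: "2 * qnorm_sq (u 1) + (\<Sum>i\<in>{2..n}. qnorm_sq (u i)) \<le> 0" by simp
  have "(\<Sum>i\<in>{2..n}. qnorm_sq (u i)) \<ge> 0" by (simp add: sum_nonneg qnorm_sq_nonneg)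
  with le qnorm_sq_nonneg[of "u 1"]
  have "qnorm_sq (u 1) = 0" "(\<Sum>i\<in>{2..n}. qnorm_sq (u i)) = 0" by linarith+
  then have u1: "u 1 = 0" and ui: "\<forall>i\<in>{2..n}. u i = 0"
    by (simp_all add: qnorm_sq_eq_0_iff sum_nonneg_eq_0_iff qnorm_sq_nonneg)
  show ?thesis
  proof
    fix i
    show "u i = 0"
    proof (cases "i \<in> {1..n+1}")
      case True
      then consider "i = 1" | "i = n+1" | "i \<in> {2..n}" by force
      then show ?thesis using u1 ui assms(3) by cases auto
    qed (use assms(2) in \<open>simp add: qvecs_def\<close>)
  qed
qed

text \<open>If \<open>v\<^sub>1 \<noteq> v\<^sub>n\<^sub>+\<^sub>1\<close>, a combination of \<open>v\<close> with the negative vector \<open>x - y\<close>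
  lies on the positive definite subspace \<open>u\<^sub>1 = u\<^sub>n\<^sub>+\<^sub>1\<close> while having norm \<open>-2\<close>.\<close>

lemma null_orthogonal_to_hyperbolic_pair:
  assumes n: "n \<ge> 1" and xq: "x \<in> qvecs n" and yq: "y \<in> qvecs n" and vq: "v \<in> qvecs n"
    and xx: "hform n x x = 0" and yy: "hform n y y = 0" and yx: "hform n y x = 1"
    and vx: "hform n v x = 0" and vy: "hform n v y = 0" and vv: "hform n v v = 0"
  shows "v = (\<lambda>i. 0)"
proof (cases "v (n+1) - v 1 = 0")
  case True
  then show ?thesis using hform_pos_on_diagonal[OF n vq] vv by simp
next
  case False
  define w where "w = (\<lambda>i. x i - y i)"
  have ww: "hform n w w = - 2"
    unfolding w_def by (simp add: hform_linear xx yy yx hform_eq_1_sym[OF yx])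
  have vw: "hform n v w = 0" "hform n w v = 0"
    unfolding w_def by (simp_all add: hform_linear vx vy hform_eq_0_sym[OF vx] hform_eq_0_sym[OF vy])
  define \<alpha> where "\<alpha> = inverse (v (n+1) - v 1) * (w 1 - w (n+1))"
  define u where "u = (\<lambda>i. v i * \<alpha> + w i)"
  have uq: "u \<in> qvecs n" using vq xq yq by (auto simp: qvecs_def u_def w_def)
  have "u (n+1) - u 1 = (v (n+1) - v 1) * \<alpha> + w (n+1) - w 1"
    unfolding u_def by (simp add: algebra_simps)
  also have "\<dots> = 0"
    unfolding \<alpha>_def using False by (simp flip: mult.assoc)
  finally have u1: "u 1 = u (n+1)" by simp
  have "hform n u u = - 2"
    unfolding u_def by (simp add: hform_add_left hform_add_right hform_scale_left hform_scale_right
        vv vw ww)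
  then have "u = (\<lambda>i. 0)" using hform_pos_on_diagonal[OF n uq u1] by simp
  then have "w = (\<lambda>i. v i * (- \<alpha>))"
    unfolding u_def by (simp add: fun_eq_iff eq_neg_iff_add_eq_0 add.commute)
  then have "hform n w w = 0" using vv by (simp only: hform_scale_left hform_scale_right) simp
  moreover have "qre (hform n w w) = - 2" using ww by simp
  ultimately show ?thesis by simp
qed

lemma exists_Sp_n1_null_to_null_via:
  assumes n: "n \<ge> 1" and q: "a \<in> qvecs n" "w \<in> qvecs n" "b \<in> qvecs n"
    and null: "hform n a a = 0" "hform n w w = 0" "hform n b b = 0"
    and "qre (hform n a w) \<noteq> 0" "qre (hform n w b) \<noteq> 0"
  shows "\<exists>B\<in>Sp_n1 n. mv n B a = b"
proof -
  obtain B1 B2 where "B1 \<in> Sp_n1 n" "B2 \<in> Sp_n1 n" "mv n B1 a = w" "mv n B2 w = b"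
    using exists_Sp_n1_null_to_null[OF n q(1,2) null(1,2)]
      exists_Sp_n1_null_to_null[OF n q(2,3) null(2,3)] assms(8,9) by blast
  then show ?thesis by (rule Sp_n1_maps_trans)
qed

text \<open>The intermediate null vector \<open>w\<close> is chosen so that \<open>Re\<langle>a,w\<rangle>\<close> and \<open>Re\<langle>w,b\<rangle>\<close>
  are both nonzero; when no choice works, \<open>a\<close> is orthogonal to the hyperbolic pair \<open>y, b\<close>.\<close>

lemma exists_Sp_n1_null_to_null_nonzero:
  assumes n: "n \<ge> 1" and aq: "a \<in> qvecs n" and bq: "b \<in> qvecs n" and yq: "y \<in> qvecs n"
    and aa: "hform n a a = 0" and bb: "hform n b b = 0" and yy: "hform n y y = 0"
    and yb: "hform n y b = 1" and anz: "a \<noteq> (\<lambda>i. 0)"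
  shows "\<exists>B\<in>Sp_n1 n. mv n B a = b"
proof -
  define g where "g = hform n a b"
  define h where "h = hform n a y"
  have by1: "hform n b y = 1" using hform_eq_1_sym[OF yb] .
  consider "qre h \<noteq> 0" | "qre g \<noteq> 0" | "qre h = 0" "qre g = 0" "g \<noteq> 0"
    | "qre h = 0" "h \<noteq> 0" "g = 0" | "h = 0" "g = 0"
    by fastforce
  then show ?thesis
  proof cases
    case 1
    then show ?thesis
      using exists_Sp_n1_null_to_null_via[OF n aq yq bq aa yy bb] yb h_def by simp
  next
    case 2
    then show ?thesis using exists_Sp_n1_null_to_null[OF n aq bq aa bb] g_def by blast
  next
    case 3
    define w where "w = (\<lambda>i. y i + b i * g)"
    have wq: "w \<in> qvecs n" using yq bq by (auto simp: qvecs_def w_def)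
    have "hform n w w = g + qcnj g"
      unfolding w_def by (simp add: hform_linear yy bb yb by1)
    then have ww: "hform n w w = 0" using 3 by (simp add: add_qcnj)
    have "hform n w b = 1" unfolding w_def by (simp add: hform_add_left hform_scale_left yb bb)
    moreover have "hform n a w = h + qcnj g * g"
      unfolding w_def by (simp add: hform_add_right hform_scale_right h_def g_def)
    ultimately show ?thesis
      using exists_Sp_n1_null_to_null_via[OF n aq wq bq aa ww bb] 3
      by (simp add: mult_qcnj qnorm_sq_eq_0_iff)
  next
    case 4
    define w where "w = (\<lambda>i. y i * (1 + h))"
    have wq: "w \<in> qvecs n" using yq by (auto simp: qvecs_def w_def)
    have ww: "hform n w w = 0" unfolding w_def by (simp add: hform_scale_left hform_scale_right yy)
    have "hform n w b = 1 + h" unfolding w_def by (simp add: hform_scale_left yb)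
    moreover have "hform n a w = h + qcnj h * h"
      unfolding w_def by (simp only: hform_scale_right) (simp add: h_def algebra_simps)
    ultimately show ?thesis
      using exists_Sp_n1_null_to_null_via[OF n aq wq bq aa ww bb] 4
      by (simp add: mult_qcnj qnorm_sq_eq_0_iff)
  next
    case 5
    have "a = (\<lambda>i. 0)"
      by (rule null_orthogonal_to_hyperbolic_pair[OF n bq yq aq bb yy yb])
        (use 5 h_def g_def aa hform_eq_0_sym in auto)
    then show ?thesis using anz by simp
  qed
qed

text \<open>With \<open>c = \<langle>a - b, b\<rangle>\<close>, the vector \<open>a - b - x c\<close> is null and orthogonal to the
  hyperbolic pair \<open>x, b\<close>, hence zero; so \<open>a = b + x c\<close> with \<open>Re c = 0\<close>, and a null
  transvection along \<open>x\<close> removes \<open>x c\<close>.\<close>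

lemma exists_Sp_n1_fixing_null:
  assumes n: "n \<ge> 1" and xq: "x \<in> qvecs n" and bq: "b \<in> qvecs n" and aq: "a \<in> qvecs n"
    and xx: "hform n x x = 0" and bb: "hform n b b = 0" and aa: "hform n a a = 0"
    and bx: "hform n b x = 1" and ax: "hform n a x = 1"
    and dd: "hform n (\<lambda>i. a i - b i) (\<lambda>i. a i - b i) = 0"
  shows "\<exists>B\<in>Sp_n1 n. mv n B a = b \<and> mv n B x = x"
proof -
  define d where "d = (\<lambda>i. a i - b i)"
  have d1: "hform n d x = 0" "hform n x d = 0"
    unfolding d_def by (simp_all add: hform_diff_left hform_diff_right ax bx
        hform_eq_1_sym[OF ax] hform_eq_1_sym[OF bx])
  define c where "c = hform n d b"
  define d' where "d' = (\<lambda>i. d i - x i * c)"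
  have "d' = (\<lambda>i. 0)"
  proof (rule null_orthogonal_to_hyperbolic_pair[OF n xq bq _ xx bb bx])
    show "d' \<in> qvecs n" using aq bq xq by (auto simp: qvecs_def d'_def d_def)
    show "hform n d' x = 0" "hform n d' b = 0" "hform n d' d' = 0"
      using dd unfolding d'_def d_def[symmetric]
      by (simp_all add: hform_linear d1 xx hform_eq_1_sym[OF bx] c_def)
  qed
  then have ad: "a = (\<lambda>i. b i + x i * c)"
    unfolding d'_def d_def by (simp add: fun_eq_iff algebra_simps)
  have "hform n a a = qcnj c + c"
    unfolding ad by (simp add: hform_linear bb bx hform_eq_1_sym[OF bx] xx)
  then have "c + qcnj c = 0" using aa by (simp add: add.commute)
  then have "(- c) + qcnj (- c) = 0" by (simp only: qcnj_minus flip: minus_add_distrib) simp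
  then have T: "tmat n x (- c) \<in> Sp_n1 n"
    by (rule null_transvection_in_Sp_n1[OF n xq xx])
  have "mv n (tmat n x (- c)) a = b"
    using ax unfolding mv_tmat[OF n xq aq] transvect_def by (simp add: ad)
  moreover have "mv n (tmat n x (- c)) x = x"
    by (simp add: mv_tmat[OF n xq xq] transvect_def xx)
  ultimately show ?thesis using T by blast
qed

text \<open>If \<open>a - Q\<^sub>k\<^sub>+\<^sub>1\<close> is not null, a reflection does the job; if it is null and
  \<open>k \<ge> 2\<close>, it is orthogonal to the hyperbolic pair \<open>Q\<^sub>1, Q\<^sub>2\<close> and vanishes.\<close>

lemma Witt_extension_step:
  assumes n: "n \<ge> 1" and k1: "1 \<le> k" and km: "k < m"
    and Qq: "\<forall>i\<in>{1..m}. Q i \<in> qvecs n" and Qn: "\<forall>i\<in>{1..m}. hform n (Q i) (Q i) = 0"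
    and Q1: "\<forall>j\<in>{2..m}. hform n (Q j) (Q 1) = 1"
    and aq: "a \<in> qvecs n" and aa: "hform n a a = 0"
    and aQ: "\<forall>i\<in>{1..k}. hform n a (Q i) = hform n (Q (Suc k)) (Q i)"
  shows "\<exists>B\<in>Sp_n1 n. mv n B a = Q (Suc k) \<and> (\<forall>i\<in>{1..k}. mv n B (Q i) = Q i)"
proof -
  define b where "b = Q (Suc k)"
  define d where "d = (\<lambda>i. a i - b i)"
  have bq: "b \<in> qvecs n" and bb: "hform n b b = 0" using Qq Qn km by (simp_all add: b_def)
  have dQ: "\<forall>i\<in>{1..k}. hform n d (Q i) = 0"
    using aQ unfolding d_def b_def by (simp add: hform_diff_left)
  have Q1q: "Q 1 \<in> qvecs n" and Q11: "hform n (Q 1) (Q 1) = 0" using Qq Qn km by auto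
  consider "hform n d d \<noteq> 0" | "hform n d d = 0" "k \<ge> 2" | "hform n d d = 0" "k = 1"
    using k1 by linarith
  then show ?thesis
  proof cases
    case 1
    then obtain B where B: "B \<in> Sp_n1 n" "mv n B a = b"
      "\<forall>w\<in>qvecs n. hform n w d = 0 \<longrightarrow> mv n B w = w"
      using exists_Sp_n1_reflection[OF n aq bq] aa bb unfolding d_def by auto
    have "\<forall>i\<in>{1..k}. mv n B (Q i) = Q i"
      using B(3) dQ hform_eq_0_sym Qq km by auto
    then show ?thesis using B b_def by blast
  next
    case 2
    have "d = (\<lambda>i. 0)"
      by (rule null_orthogonal_to_hyperbolic_pair[OF n Q1q _ _ Q11 _ _ _ _ 2(1), of "Q 2"])
        (use Qq Qn Q1 dQ 2(2) km aq bq in \<open>auto simp: d_def qvecs_def\<close>)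
    then have "a = b" unfolding d_def by (simp add: fun_eq_iff)
    then show ?thesis
      using Sp_n1_idmat mv_idmat Qq km aq b_def by (metis atLeastAtMost_iff le_trans less_imp_le)
  next
    case 3
    have "hform n b (Q 1) = 1" "hform n a (Q 1) = 1"
      using Q1 aQ km 3(2) by (auto simp: b_def numeral_2_eq_2)
    then show ?thesis
      using exists_Sp_n1_fixing_null[OF n Q1q bq aq Q11 bb aa] 3 b_def d_def by auto
  qed
qed

theorem Witt_null_frame:
  fixes P Q :: "nat \<Rightarrow> qvec"
  assumes n: "n \<ge> 1" and m: "m \<ge> 2"
    and Pq: "\<forall>i\<in>{1..m}. P i \<in> qvecs n" and Qq: "\<forall>i\<in>{1..m}. Q i \<in> qvecs n"
    and Pn: "\<forall>i\<in>{1..m}. hform n (P i) (P i) = 0"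
    and G: "\<forall>i\<in>{1..m}. \<forall>j\<in>{1..m}. hform n (P i) (P j) = hform n (Q i) (Q j)"
    and P1: "\<forall>j\<in>{2..m}. hform n (P j) (P 1) = 1"
  shows "\<exists>A\<in>Sp_n1 n. \<forall>i\<in>{1..m}. mv n A (P i) = Q i"
proof -
  have Qn: "\<forall>i\<in>{1..m}. hform n (Q i) (Q i) = 0" using Pn G by auto
  have Q1: "\<forall>j\<in>{2..m}. hform n (Q j) (Q 1) = 1" using P1 G by auto
  have "k \<le> m \<Longrightarrow> \<exists>A\<in>Sp_n1 n. \<forall>i\<in>{1..k}. mv n A (P i) = Q i" for k
  proof (induction k)
    case 0
    then show ?case using Sp_n1_idmat by auto
  next
    case (Suc k)
    then obtain A where A: "A \<in> Sp_n1 n" "\<forall>i\<in>{1..k}. mv n A (P i) = Q i" by auto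
    define a where "a = mv n A (P (Suc k))"
    have PSk: "P (Suc k) \<in> qvecs n" using Pq Suc.prems by simp
    have aa: "hform n a a = 0"
      unfolding a_def using Sp_n1_hform[OF A(1) PSk PSk] Pn Suc.prems by simp
    obtain B where B: "B \<in> Sp_n1 n" "mv n B a = Q (Suc k)" "\<forall>i\<in>{1..k}. mv n B (Q i) = Q i"
    proof (cases "k = 0")
      case True
      have P2: "P 2 \<in> qvecs n" using Pq m by simp
      have "hform n a (mv n A (P 2)) = hform n (P 1) (P 2)"
        unfolding a_def using Sp_n1_hform[OF A(1) PSk P2] True by simp
      also have "\<dots> = 1" using P1 m hform_eq_1_sym by simp
      finally have "a \<noteq> (\<lambda>i. 0)" by auto
      then obtain B where "B \<in> Sp_n1 n" "mv n B a = Q 1"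
        using exists_Sp_n1_null_to_null_nonzero[OF n _ _ _ aa, of "Q 1" "Q 2"] Qq Qn Q1 m
        by (auto simp: a_def)
      then show ?thesis using that True by auto
    next
      case False
      have "\<forall>i\<in>{1..k}. hform n a (Q i) = hform n (Q (Suc k)) (Q i)"
      proof
        fix i assume i: "i \<in> {1..k}"
        have "hform n a (Q i) = hform n (P (Suc k)) (P i)"
          unfolding a_def using Sp_n1_hform[OF A(1) PSk] A(2) Pq i Suc.prems by force
        then show "hform n a (Q i) = hform n (Q (Suc k)) (Q i)" using G i Suc.prems by simp
      qed
      moreover have "1 \<le> k" "k < m" using False Suc.prems by auto
      ultimately show ?thesis
        using Witt_extension_step[OF n _ _ Qq Qn Q1 mv_in_qvecs aa[unfolded a_def]] that
        unfolding a_def by blast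
    qed
    have "\<forall>i\<in>{1..Suc k}. mv n (mmul n B A) (P i) = Q i"
      using A(2) B(2,3) by (auto simp: mv_mmul a_def le_Suc_eq)
    then show ?case using Sp_n1_mmul[OF B(1) A(1)] by blast
  qed
  then show ?thesis by blast
qed

definition qrot :: "quat \<Rightarrow> quat \<Rightarrow> quat" where
  "qrot \<mu> x = \<mu> * x * qcnj \<mu>"

lemma qrot_qcnj: "qrot \<mu> (qcnj x) = qcnj (qrot \<mu> x)"
  by (simp add: qrot_def qcnj_mult mult.assoc)

lemma qrot_add: "qrot \<mu> (x + y) = qrot \<mu> x + qrot \<mu> y"
  by (simp add: qrot_def algebra_simps)

context
  fixes \<mu> :: quat
  assumes unit: "qabs \<mu> = 1"
begin

lemma qrot_mult: "qrot \<mu> (x * y) = qrot \<mu> x * qrot \<mu> y"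
proof -
  have "qrot \<mu> x * qrot \<mu> y = \<mu> * (x * ((qcnj \<mu> * \<mu>) * (y * qcnj \<mu>)))"
    by (simp only: qrot_def mult.assoc)
  also have "\<dots> = qrot \<mu> (x * y)"
    using unit_quat_mult_qcnj[OF unit] by (simp only: qrot_def mult.assoc mult_1_left)
  finally show ?thesis by simp
qed

lemma qrot_1: "qrot \<mu> 1 = 1"
  using unit_quat_mult_qcnj[OF unit] by (simp add: qrot_def)

lemma qrot_quat_of_real: "qrot \<mu> (quat_of_real r) = quat_of_real r"
proof -
  have "qrot \<mu> (quat_of_real r) = quat_of_real r * (\<mu> * qcnj \<mu>)"
    unfolding qrot_def by (simp only: quat_of_real_commute mult.assoc)
  then show ?thesis using unit_quat_mult_qcnj[OF unit] by simp
qed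

lemma qrot_eq_0_iff: "qrot \<mu> x = 0 \<longleftrightarrow> x = 0"
proof
  assume "qrot \<mu> x = 0"
  then have "qcnj \<mu> * qrot \<mu> x * \<mu> = 0" by simp
  then show "x = 0"
    using unit_quat_mult_qcnj[OF unit] by (simp add: qrot_def mult.assoc flip: mult.assoc[of "qcnj \<mu>" \<mu>])
qed (simp add: qrot_def)

lemma qrot_cancel_left:
  assumes "g \<noteq> 0" "g' = qrot \<mu> g" "inverse g' * h' = qrot \<mu> (inverse g * h)"
  shows "h' = qrot \<mu> h"
proof -
  have "g' \<noteq> 0" using assms(1,2) qrot_eq_0_iff by simp
  then have "h' = g' * (inverse g' * h')" by (simp flip: mult.assoc)
  also have "\<dots> = qrot \<mu> (g * (inverse g * h))" using assms(2,3) by (simp add: qrot_mult)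
  also have "g * (inverse g * h) = h" using assms(1) by (simp flip: mult.assoc)
  finally show ?thesis .
qed

lemma qrot_eq_if_real:
  assumes "qim x = 0" "qim y = 0" "qre x = qre y"
  shows "y = qrot \<mu> x"
  using assms by (metis quat_decomp add.right_neutral qrot_quat_of_real)

lemma qrot_eq_if_qim_direction:
  assumes re: "qre x = qre y" and r: "qabs (qim x) = qabs (qim y)" "qabs (qim x) \<noteq> 0"
    and dir: "qscale (1 / qabs (qim y)) (qim y) = qrot \<mu> (qscale (1 / qabs (qim x)) (qim x))"
  shows "y = qrot \<mu> x"
proof -
  define r where "r = qabs (qim x)"
  have rr: "quat_of_real r * quat_of_real (1 / r) = 1"
    using r(2) unfolding r_def by (intro quat_eqI) simp_all
  have "quat_of_real (1 / r) * qim y = quat_of_real (1 / r) * qrot \<mu> (qim x)"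
    using dir r(1) unfolding r_def by (simp add: qscale_eq_mult qrot_mult qrot_quat_of_real)
  then have "qim y = qrot \<mu> (qim x)"
    using rr by (metis mult.assoc mult_1_left)
  then have "quat_of_real (qre y) + qim y = qrot \<mu> (quat_of_real (qre x) + qim x)"
    using re by (simp add: qrot_add qrot_quat_of_real)
  then show ?thesis by (simp flip: quat_decomp)
qed

text \<open>This is how \<open>A\<^sub>2\<^sub>3\<close> and \<open>u\<^sub>0\<close> pin down \<open>g\<^sub>2\<^sub>3\<close>.\<close>

lemma unit_quat_eq_qrot:
  assumes x: "qabs x = 1" and y: "qabs y = 1"
    and angle: "arccos (- qre x) = arccos (- qre y)"
    and axis: "arccos (- qre x) \<noteq> 0 \<Longrightarrow>
      qscale (1 / qabs (qim y)) (qim y) = qrot \<mu> (qscale (1 / qabs (qim x)) (qim x))"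
  shows "y = qrot \<mu> x"
proof -
  have x1: "(qre x)\<^sup>2 + qnorm_sq (qim x) = 1" and y1: "(qre y)\<^sup>2 + qnorm_sq (qim y) = 1"
    using x y by (simp_all add: qabs_eq_1_iff qnorm_sq_def qim_def)
  have "(qre x)\<^sup>2 \<le> 1" "(qre y)\<^sup>2 \<le> 1"
    using x1 y1 qnorm_sq_nonneg[of "qim x"] qnorm_sq_nonneg[of "qim y"] by linarith+
  then have "\<bar>qre x\<bar> \<le> 1" "\<bar>qre y\<bar> \<le> 1"
    by (simp_all add: abs_square_le_1)
  then have re: "qre x = qre y"
    using angle arccos_eq_iff[of "- qre x" "- qre y"] by simp
  then have "qnorm_sq (qim x) = qnorm_sq (qim y)" using x1 y1 by simp
  then have r: "qabs (qim x) = qabs (qim y)" by (simp add: qabs_def qnorm_sq_def)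
  show ?thesis
  proof (cases "arccos (- qre x) = 0 \<or> qabs (qim x) = 0")
    case True
    have "qim x = 0"
    proof (cases "arccos (- qre x) = 0")
      case True
      then have "qre x = - 1"
        using arccos_eq_0_iff[of "- qre x"] \<open>\<bar>qre x\<bar> \<le> 1\<close> by (simp add: abs_le_iff)
      then show ?thesis using x1 by (simp add: qnorm_sq_eq_0_iff)
    qed (use True qabs_eq_0_iff in auto)
    moreover have "qim y = 0" using r calculation by (metis qabs_eq_0_iff)
    ultimately show ?thesis by (rule qrot_eq_if_real[OF _ _ re])
  next
    case False
    then show ?thesis using qrot_eq_if_qim_direction[OF re r] axis by blast
  qed
qed

end

lemma qline_scale:
  assumes "(c::quat) \<noteq> 0"
  shows "qline (\<lambda>k. z k * c) = qline z"
proof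
  show "qline (\<lambda>k. z k * c) \<subseteq> qline z"
    using assms by (auto simp: qline_def mult.assoc)
  show "qline z \<subseteq> qline (\<lambda>k. z k * c)"
  proof
    fix x assume "x \<in> qline z"
    then obtain e where e: "e \<noteq> 0" "x = (\<lambda>i. z i * e)" unfolding qline_def by auto
    then have "x = (\<lambda>i. z i * c * (inverse c * e))" "inverse c * e \<noteq> 0"
      using assms by (simp_all add: mult.assoc flip: mult.assoc[of c])
    then show "x \<in> qline (\<lambda>k. z k * c)" unfolding qline_def by blast
  qed
qed

lemma mv_image_qline: "mv n A ` qline z = qline (mv n A z)"
proof -
  have "qline w = (\<lambda>c i. w i * c) ` {c. c \<noteq> 0}" for w by (auto simp: qline_def)
  then show ?thesis by (simp add: image_image mv_scale)
qed

lemma is_lift_bdry: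
  assumes "\<forall>i\<in>{1..m}. p i \<in> bdry n" and "is_lift m p P"
  shows "\<forall>i\<in>{1..m}. P i \<in> qvecs n \<and> hform n (P i) (P i) = 0 \<and> p i = qline (P i)"
proof
  fix i assume i: "i \<in> {1..m}"
  obtain z where z: "p i = qline z" "z \<in> qvecs n" "hform n z z = 0"
    using assms(1) i unfolding bdry_def by blast
  obtain c where "c \<noteq> 0" "P i = (\<lambda>k. z k * c)"
    using assms(2) i z(1) unfolding is_lift_def qline_def by blast
  then show "P i \<in> qvecs n \<and> hform n (P i) (P i) = 0 \<and> p i = qline (P i)"
    using z by (auto simp: qvecs_def hform_scale_left hform_scale_right qline_scale)
qed

lemma null_eq_if_orthogonal:
  assumes n: "n \<ge> 1" and q: "x \<in> qvecs n" "y \<in> qvecs n" "z \<in> qvecs n"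
    and null: "hform n x x = 0" "hform n y y = 0" "hform n z z = 0"
    and "hform n y x = 1" "hform n z x = 1" "hform n y z = 0"
  shows "z = y"
proof -
  define v where "v = (\<lambda>k. z k - y k)"
  have "v = (\<lambda>k. 0)"
  proof (rule null_orthogonal_to_hyperbolic_pair[OF n q(1,2) _ null(1,2) assms(8)])
    show "v \<in> qvecs n" using q by (auto simp: qvecs_def v_def)
    show "hform n v x = 0" "hform n v y = 0" "hform n v v = 0"
      unfolding v_def using assms(8-10) hform_eq_0_sym[OF assms(10)]
      by (simp_all add: hform_diff_left hform_diff_right null)
  qed
  then show ?thesis unfolding v_def by (simp add: fun_eq_iff)
qed

lemma semi_normalized_hform_2_ne_0:
  fixes P :: "nat \<Rightarrow> qvec"
  assumes n: "n \<ge> 1"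
    and P: "\<forall>i\<in>{1..m}. P i \<in> qvecs n \<and> hform n (P i) (P i) = 0 \<and> p i = qline (P i)"
    and P1: "\<forall>j\<in>{2..m}. hform n (P j) (P 1) = 1"
    and distinct: "\<forall>i\<in>{1..m}. \<forall>j\<in>{1..m}. i \<noteq> j \<longrightarrow> p i \<noteq> p j"
  shows "\<forall>j\<in>{3..m}. hform n (P 2) (P j) \<noteq> 0"
proof (intro ballI notI)
  fix j assume j: "j \<in> {3..m}" and "hform n (P 2) (P j) = 0"
  then have "P j = P 2"
    using P P1 by (intro null_eq_if_orthogonal[OF n, of "P 1"]) auto
  then have "p j = p 2" using P j by force
  then show False using distinct j by force
qed

lemma cross_ratio_normalized:
  "hform n z3 z1 = 1 \<Longrightarrow> hform n z4 z1 = 1 \<Longrightarrow>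
   cross_ratio n z1 z2 z3 z4 = inverse (hform n z3 z2) * hform n z4 z2"
  by (simp add: cross_ratio_def)

lemma A23_semi_normalized:
  assumes "semi_normalized n m P" "m \<ge> 3"
  shows "A23 n P = arccos (- qre (hform n (P 3) (P 2)))"
proof -
  have "hform n (P 2) (P 1) = 1" "hform n (P 3) (P 1) = 1" "qabs (hform n (P 3) (P 2)) = 1"
    using assms unfolding semi_normalized_def gram_def by auto
  moreover have "hform n (P 2) (P 3) = qcnj (hform n (P 3) (P 2))"
    by (rule hform_conj)
  ultimately show ?thesis
    unfolding A23_def herm_triple_def by (simp add: hform_eq_1_sym)
qed

definition cross_ratio_indices :: "nat \<Rightarrow> (nat \<times> nat \<times> nat) list" where
  "cross_ratio_indices m =
     map (\<lambda>j. (2, 3, j)) [4..<m+1] @ map (\<lambda>j. (3, 2, j)) [4..<m+1] @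
     concat (map (\<lambda>k. map (\<lambda>j. (k, 2, j)) [k+1..<m+1]) [4..<m+1])"

lemma cross_ratios_eq_map_indices:
  "cross_ratios n m P =
     map (\<lambda>(a, b, j). cross_ratio n (P 1) (P a) (P b) (P j)) (cross_ratio_indices m)"
  by (simp add: cross_ratios_def cross_ratio_indices_def map_concat o_def)

lemma cross_ratios_qrot_entry:
  assumes "cross_ratios n m Q = map (qrot \<mu>) (cross_ratios n m P)"
    and "(a, b, j) \<in> set (cross_ratio_indices m)"
  shows "cross_ratio n (Q 1) (Q a) (Q b) (Q j) = qrot \<mu> (cross_ratio n (P 1) (P a) (P b) (P j))"
  using assms unfolding cross_ratios_eq_map_indices map_map by (auto simp: map_eq_conv)

section \<open>Recovering the Gram matrix\<close>

lemma hform_3_2_qrot: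
  assumes unit: "qabs \<mu> = 1" and m: "m \<ge> 3"
    and P: "semi_normalized n m P" and Q: "semi_normalized n m Q"
    and A: "A23 n P = A23 n Q" and u: "u0 n Q = qrot \<mu> (u0 n P)"
  shows "hform n (Q 3) (Q 2) = qrot \<mu> (hform n (P 3) (P 2))"
proof -
  define x y where "x = hform n (P 3) (P 2)" and "y = hform n (Q 3) (Q 2)"
  have unit_xy: "qabs x = 1" "qabs y = 1"
    using P Q unfolding semi_normalized_def gram_def x_def y_def by simp_all
  have AP: "A23 n P = arccos (- qre x)" and AQ: "A23 n Q = arccos (- qre y)"
    unfolding x_def y_def using A23_semi_normalized m P Q by simp_all
  have "u0 n P = (if arccos (- qre x) \<noteq> 0 then qscale (1 / qabs (qim x)) (qim x) else 0)"
    "u0 n Q = (if arccos (- qre y) \<noteq> 0 then qscale (1 / qabs (qim y)) (qim y) else 0)"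
    unfolding u0_def AP AQ by (simp_all add: gram_def x_def y_def)
  then have "y = qrot \<mu> x"
    using A u unit_quat_eq_qrot[OF unit unit_xy] unfolding AP AQ
    by (cases "arccos (- qre y) = 0") simp_all
  then show ?thesis unfolding x_def y_def .
qed

context
  fixes n m :: nat and \<mu> :: quat and P Q :: "nat \<Rightarrow> qvec"
  assumes unit: "qabs \<mu> = 1"
    and P1: "\<forall>j\<in>{2..m}. hform n (P j) (P 1) = 1" and Q1: "\<forall>j\<in>{2..m}. hform n (Q j) (Q 1) = 1"
    and P2: "\<forall>j\<in>{3..m}. hform n (P 2) (P j) \<noteq> 0"
    and g32: "hform n (Q 3) (Q 2) = qrot \<mu> (hform n (P 3) (P 2))"
    and X: "cross_ratios n m Q = map (qrot \<mu>) (cross_ratios n m P)"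
begin

lemma cross_ratio_indices_qrot:
  assumes "(a, b, j) \<in> set (cross_ratio_indices m)" "b \<in> {2..m}" "j \<in> {2..m}"
  shows "inverse (hform n (Q b) (Q a)) * hform n (Q j) (Q a)
    = qrot \<mu> (inverse (hform n (P b) (P a)) * hform n (P j) (P a))"
  using cross_ratios_qrot_entry[OF X assms(1)] assms(2,3) P1 Q1
  by (simp add: cross_ratio_normalized del: One_nat_def)

lemma hform_col2_qrot:
  assumes k: "k \<in> {3..m}"
  shows "hform n (Q k) (Q 2) = qrot \<mu> (hform n (P k) (P 2))"
proof (cases "k = 3")
  case False
  then have "(2, 3, k) \<in> set (cross_ratio_indices m)"
    using k by (auto simp: cross_ratio_indices_def)
  then have quot: "inverse (hform n (Q 3) (Q 2)) * hform n (Q k) (Q 2)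
      = qrot \<mu> (inverse (hform n (P 3) (P 2)) * hform n (P k) (P 2))"
    by (rule cross_ratio_indices_qrot) (use k in auto)
  have "hform n (P 2) (P 3) \<noteq> 0" using P2 k by simp
  then have "hform n (P 3) (P 2) \<noteq> 0" by (metis hform_conj qcnj_0)
  then show ?thesis using qrot_cancel_left[OF unit _ g32 quot] by blast
qed (use g32 in simp)

lemma hform_col3_qrot:
  assumes k: "k \<in> {4..m}"
  shows "hform n (Q k) (Q 3) = qrot \<mu> (hform n (P k) (P 3))"
proof -
  have "(3, 2, k) \<in> set (cross_ratio_indices m)"
    using k by (auto simp: cross_ratio_indices_def)
  then have quot: "inverse (hform n (Q 2) (Q 3)) * hform n (Q k) (Q 3)
      = qrot \<mu> (inverse (hform n (P 2) (P 3)) * hform n (P k) (P 3))"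
    by (rule cross_ratio_indices_qrot) (use k in auto)
  have "hform n (Q 2) (Q 3) = qrot \<mu> (hform n (P 2) (P 3))"
    using g32 by (metis hform_conj qrot_qcnj)
  moreover have "hform n (P 2) (P 3) \<noteq> 0" using P2 k by simp
  ultimately show ?thesis using qrot_cancel_left[OF unit _ _ quot] by blast
qed

lemma hform_col_qrot:
  assumes jk: "4 \<le> j" "j < k" "k \<le> m"
  shows "hform n (Q k) (Q j) = qrot \<mu> (hform n (P k) (P j))"
proof -
  have "(j, 2, k) \<in> set (cross_ratio_indices m)"
    using jk by (auto simp: cross_ratio_indices_def image_iff intro!: bexI[of _ j])
  then have quot: "inverse (hform n (Q 2) (Q j)) * hform n (Q k) (Q j)
      = qrot \<mu> (inverse (hform n (P 2) (P j)) * hform n (P k) (P j))"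
    by (rule cross_ratio_indices_qrot) (use jk in auto)
  have "hform n (Q j) (Q 2) = qrot \<mu> (hform n (P j) (P 2))"
    using jk by (intro hform_col2_qrot) simp
  then have "hform n (Q 2) (Q j) = qrot \<mu> (hform n (P 2) (P j))"
    by (metis hform_conj qrot_qcnj)
  moreover have "hform n (P 2) (P j) \<noteq> 0" using P2 jk by simp
  ultimately show ?thesis using qrot_cancel_left[OF unit _ _ quot] by blast
qed

lemma gram_qrot:
  assumes null: "\<forall>i\<in>{1..m}. hform n (P i) (P i) = 0 \<and> hform n (Q i) (Q i) = 0"
  shows "\<forall>i\<in>{1..m}. \<forall>j\<in>{1..m}. hform n (Q i) (Q j) = qrot \<mu> (hform n (P i) (P j))"
proof -
  have below: "hform n (Q k) (Q j) = qrot \<mu> (hform n (P k) (P j))"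
    if jk: "j \<in> {1..m}" "k \<in> {1..m}" "j < k" for j k
  proof -
    consider "j = 1" | "j = 2" | "j = 3" | "j \<ge> 4" using jk by force
    then show ?thesis
      using jk P1 Q1 qrot_1[OF unit] hform_col2_qrot[of k] hform_col3_qrot[of k]
        hform_col_qrot[of j k]
      by cases auto
  qed
  show ?thesis
  proof (intro ballI)
    fix i j assume ij: "i \<in> {1..m}" "j \<in> {1..m}"
    consider "i = j" | "j < i" | "i < j" by force
    then show "hform n (Q i) (Q j) = qrot \<mu> (hform n (P i) (P j))"
    proof cases
      case 3
      then show ?thesis using below ij by (metis hform_conj qrot_qcnj)
    qed (use null below ij in \<open>auto simp: qrot_def\<close>)
  qed
qed

end

text \<open>Rescaling the lift \<open>Q\<close> by \<open>\<mu>\<close> turns Gram entries conjugated by \<open>\<mu>\<close> into equal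
  ones, so Witt's theorem applies.\<close>

lemma PSp_congruent_if_gram_qrot:
  fixes P Q :: "nat \<Rightarrow> qvec"
  assumes n: "n \<ge> 1" and m: "m \<ge> 2" and unit: "qabs \<mu> = 1"
    and P: "\<forall>i\<in>{1..m}. P i \<in> qvecs n \<and> hform n (P i) (P i) = 0 \<and> p i = qline (P i)"
    and Q: "\<forall>i\<in>{1..m}. Q i \<in> qvecs n \<and> q i = qline (Q i)"
    and P1: "\<forall>j\<in>{2..m}. hform n (P j) (P 1) = 1"
    and G: "\<forall>i\<in>{1..m}. \<forall>j\<in>{1..m}. hform n (Q i) (Q j) = qrot \<mu> (hform n (P i) (P j))"
  shows "PSp_congruent n m p q"
proof -
  define Q' where "Q' = (\<lambda>i k. Q i k * \<mu>)"
  have G': "\<forall>i\<in>{1..m}. \<forall>j\<in>{1..m}. hform n (P i) (P j) = hform n (Q' i) (Q' j)"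
  proof (intro ballI)
    fix i j assume "i \<in> {1..m}" "j \<in> {1..m}"
    then have "hform n (Q' i) (Q' j) = (qcnj \<mu> * \<mu>) * hform n (P i) (P j) * (qcnj \<mu> * \<mu>)"
      unfolding Q'_def using G by (simp add: hform_scale_left hform_scale_right qrot_def mult.assoc)
    then show "hform n (P i) (P j) = hform n (Q' i) (Q' j)"
      using unit_quat_mult_qcnj[OF unit] by simp
  qed
  have Pq: "\<forall>i\<in>{1..m}. P i \<in> qvecs n" and Pn: "\<forall>i\<in>{1..m}. hform n (P i) (P i) = 0"
    using P by simp_all
  have Q'q: "\<forall>i\<in>{1..m}. Q' i \<in> qvecs n" using Q by (auto simp: Q'_def qvecs_def)
  obtain A where A: "A \<in> Sp_n1 n" "\<forall>i\<in>{1..m}. mv n A (P i) = Q' i"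
    using Witt_null_frame[OF n m Pq Q'q Pn G' P1] by blast
  have "\<mu> \<noteq> 0" using unit by (auto simp: qabs_def)
  then have "\<forall>i\<in>{1..m}. mv n A ` p i = q i"
    using A(2) P Q by (simp add: mv_image_qline Q'_def qline_scale)
  then show ?thesis unfolding PSp_congruent_def using A(1) by blast
qed

theorem corollary1p6:
  fixes n m :: nat and p q :: "nat \<Rightarrow> qvec set" and P Q :: "nat \<Rightarrow> qvec"
  assumes "n \<ge> 1" and "m \<ge> 4"
    and "\<forall>i\<in>{1..m}. p i \<in> bdry n" and "\<forall>i\<in>{1..m}. \<forall>j\<in>{1..m}. i \<noteq> j \<longrightarrow> p i \<noteq> p j"
    and "\<forall>i\<in>{1..m}. q i \<in> bdry n" and "\<forall>i\<in>{1..m}. \<forall>j\<in>{1..m}. i \<noteq> j \<longrightarrow> q i \<noteq> q j"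
    and "is_lift m p P" and "semi_normalized n m P"
    and "is_lift m q Q" and "semi_normalized n m Q"
    and "Sp1_congruent (Finv n m P) (Finv n m Q)"
    and "A23 n P = A23 n Q"
  shows "PSp_congruent n m p q"
proof -
  obtain \<mu> where unit: "qabs \<mu> = 1" and "Finv n m Q = map (qrot \<mu>) (Finv n m P)"
    using assms(11) unfolding Sp1_congruent_def qrot_def[abs_def] by blast
  then have u: "u0 n Q = qrot \<mu> (u0 n P)"
    and X: "cross_ratios n m Q = map (qrot \<mu>) (cross_ratios n m P)"
    unfolding Finv_def by simp_all
  have P: "\<forall>i\<in>{1..m}. P i \<in> qvecs n \<and> hform n (P i) (P i) = 0 \<and> p i = qline (P i)"
    and Q: "\<forall>i\<in>{1..m}. Q i \<in> qvecs n \<and> hform n (Q i) (Q i) = 0 \<and> q i = qline (Q i)"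
    using is_lift_bdry assms(3,5,7,9) by blast+
  have P1: "\<forall>j\<in>{2..m}. hform n (P j) (P 1) = 1" and Q1: "\<forall>j\<in>{2..m}. hform n (Q j) (Q 1) = 1"
    using assms(8,10) unfolding semi_normalized_def gram_def by simp_all
  have g32: "hform n (Q 3) (Q 2) = qrot \<mu> (hform n (P 3) (P 2))"
    using hform_3_2_qrot[OF unit _ assms(8,10,12) u] assms(2) by simp
  have P2: "\<forall>j\<in>{3..m}. hform n (P 2) (P j) \<noteq> 0"
    by (rule semi_normalized_hform_2_ne_0[OF assms(1) P P1 assms(4)])
  have G: "\<forall>i\<in>{1..m}. \<forall>j\<in>{1..m}. hform n (Q i) (Q j) = qrot \<mu> (hform n (P i) (P j))"
    using gram_qrot[OF unit P1 Q1 P2 g32 X] P Q by simp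
  have "m \<ge> 2" and "\<forall>i\<in>{1..m}. Q i \<in> qvecs n \<and> q i = qline (Q i)"
    using assms(2) Q by simp_all
  then show ?thesis by (rule PSp_congruent_if_gram_qrot[OF assms(1) _ unit P _ P1 G])
qed
end
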